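(* If $G$ is a connected graph and $n\ge 1$, then $\mathrm{gp}(G\boxtimes K_n)=n\cdot \mathrm{gp}(G)$. Moreover, if $\mathrm{gp}(G)=\omega(G_{\rm SR})$, then $\mathrm{gp}(G\boxtimes K_n)=\omega((G\boxtimes K_n)_{\rm SR})$.
   Context: All graphs are finite and simple. The strong product $G\boxtimes H$ has vertex set $V(G)\times V(H)$, with distinct $(g,h),(g',h')$ adjacent iff ($g=g'$ or $gg'\in E(G)$) and ($h=h'$ or $hh'\in E(H)$). For a connected graph $G$, a set $S\subseteq V(G)$ is a general position set if no three pairwise distinct vertices of $S$ lie on a common geodesic (shortest path); $\mathrm{gp}(G)$ is the maximum cardinality of a general position set. A vertex $u$ is maximally distant from $v$ if every neighbor $w$ of $u$ satisfies $d_G(v,w)\le d_G(u,v)$; $u,v$ are mutually maximally distant (MMD) if each is maximally distant from the other. The strong resolving graph $G_{\rm SR}$ has vertex set $V(G)$, distinct vertices adjacent iff MMD in $G$. $\omega$ is the clique number. *)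

theory Defs
  imports Main
begin

type_synonym 'a graph = "'a set \<times> ('a \<times> 'a) set"

definition verts :: "'a graph \<Rightarrow> 'a set" where "verts G = fst G"
definition adj :: "'a graph \<Rightarrow> 'a \<Rightarrow> 'a \<Rightarrow> bool" where "adj G u v \<longleftrightarrow> (u, v) \<in> snd G"

definition simple_graph :: "'a graph \<Rightarrow> bool" where
  "simple_graph G \<longleftrightarrow> finite (verts G) \<and> snd G \<subseteq> verts G \<times> verts G
     \<and> sym (snd G) \<and> irrefl (snd G)"

text \<open>Walks as nonempty vertex lists; length of a walk = number of edges.\<close>
definition walk :: "'a graph \<Rightarrow> 'a list \<Rightarrow> bool" where
  "walk G xs \<longleftrightarrow> xs \<noteq> [] \<and> set xs \<subseteq> verts G \<and> (\<forall>i. Suc i < length xs \<longrightarrow> adj G (xs ! i) (xs ! Suc i))"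

definition walk_betw :: "'a graph \<Rightarrow> 'a \<Rightarrow> 'a list \<Rightarrow> 'a \<Rightarrow> bool" where
  "walk_betw G u xs v \<longleftrightarrow> walk G xs \<and> hd xs = u \<and> last xs = v"

definition connected_graph :: "'a graph \<Rightarrow> bool" where
  "connected_graph G \<longleftrightarrow> verts G \<noteq> {} \<and> (\<forall>u\<in>verts G. \<forall>v\<in>verts G. \<exists>xs. walk_betw G u xs v)"

definition dist :: "'a graph \<Rightarrow> 'a \<Rightarrow> 'a \<Rightarrow> nat" where
  "dist G u v = (LEAST k. \<exists>xs. walk_betw G u xs v \<and> length xs = Suc k)"

definition geodesic :: "'a graph \<Rightarrow> 'a \<Rightarrow> 'a list \<Rightarrow> 'a \<Rightarrow> bool" where
  "geodesic G u xs v \<longleftrightarrow> walk_betw G u xs v \<and> length xs = Suc (dist G u v)"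

definition gp_set :: "'a graph \<Rightarrow> 'a set \<Rightarrow> bool" where
  "gp_set G S \<longleftrightarrow> S \<subseteq> verts G \<and>
     (\<forall>x\<in>S. \<forall>y\<in>S. \<forall>z\<in>S. x \<noteq> y \<and> y \<noteq> z \<and> x \<noteq> z \<longrightarrow>
        \<not> (\<exists>u v xs. geodesic G u xs v \<and> {x, y, z} \<subseteq> set xs))"

definition gp :: "'a graph \<Rightarrow> nat" where
  "gp G = Max {card S | S. gp_set G S}"

definition maximally_distant :: "'a graph \<Rightarrow> 'a \<Rightarrow> 'a \<Rightarrow> bool" where
  "maximally_distant G u v \<longleftrightarrow> (\<forall>w. adj G u w \<longrightarrow> dist G v w \<le> dist G u v)"

definition MMD :: "'a graph \<Rightarrow> 'a \<Rightarrow> 'a \<Rightarrow> bool" where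
  "MMD G u v \<longleftrightarrow> maximally_distant G u v \<and> maximally_distant G v u"

definition strong_resolving_graph :: "'a graph \<Rightarrow> 'a graph" where
  "strong_resolving_graph G =
     (verts G, {(u, v). u \<in> verts G \<and> v \<in> verts G \<and> u \<noteq> v \<and> MMD G u v})"

definition clique :: "'a graph \<Rightarrow> 'a set \<Rightarrow> bool" where
  "clique G K \<longleftrightarrow> K \<subseteq> verts G \<and> (\<forall>u\<in>K. \<forall>v\<in>K. u \<noteq> v \<longrightarrow> adj G u v)"

definition clique_number :: "'a graph \<Rightarrow> nat" where
  "clique_number G = Max {card K | K. clique G K}"

definition complete_graph :: "nat \<Rightarrow> nat graph" where
  "complete_graph n = ({0..<n}, {(i, j). i < n \<and> j < n \<and> i \<noteq> j})"

definition strong_product :: "'a graph \<Rightarrow> 'b graph \<Rightarrow> ('a \<times> 'b) graph" where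
  "strong_product G H = (verts G \<times> verts H,
     {((g, h), (g', h')). (g, h) \<in> verts G \<times> verts H \<and> (g', h') \<in> verts G \<times> verts H
        \<and> (g, h) \<noteq> (g', h') \<and> (g = g' \<or> adj G g g') \<and> (h = h' \<or> adj H h h')})"

end

theory Submission
  imports Defs
begin

(* In G \<boxtimes> K_n the distance between (x, i) and (y, j) is d_G(x, y) if x \<noteq> y and 1 if x = y,
   i \<noteq> j: a shortest walk of G lifts to any pair of layers, and the projection to G of a walk in
   the product pauses or moves along edges.  Hence three distinct vertices of the product lie on a
   common geodesic iff their projections are three distinct vertices of G lying on a common
   geodesic, and two distinct vertices are mutually maximally distant iff their projections
   coincide or are mutually maximally distant.  So the projection of a general position set
   (of a clique of the strong resolving graph) is again one, and conversely T \<times> V(K_n) is one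
   whenever T is; both maxima are therefore multiplied by n. *)

section \<open>Walks and distances\<close>

lemma walk_iff_successively:
  "walk G xs \<longleftrightarrow> xs \<noteq> [] \<and> set xs \<subseteq> verts G \<and> successively (adj G) xs"
  unfolding walk_def successively_conv_nth by auto

lemma simple_graph_adjD:
  assumes "simple_graph G" "adj G u v"
  shows "u \<in> verts G" "v \<in> verts G" "adj G v u" "u \<noteq> v"
  using assms by (auto simp: simple_graph_def adj_def verts_def sym_def irrefl_def)

lemma walk_betw_singleton: "u \<in> verts G \<Longrightarrow> walk_betw G u [u] u"
  by (simp add: walk_betw_def walk_iff_successively)

lemma walk_betw_edge: "simple_graph G \<Longrightarrow> adj G u v \<Longrightarrow> walk_betw G u [u, v] v"
  by (simp add: walk_betw_def walk_iff_successively simple_graph_adjD)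

lemma walk_betw_append:
  assumes "walk_betw G a p b" "walk_betw G b q c"
  shows "walk_betw G a (p @ tl q) c" "length (p @ tl q) = length p + length q - 1"
proof -
  have p: "p \<noteq> []" "last p = b"
    using assms(1) by (auto simp: walk_betw_def walk_def)
  have q: "q = b # tl q"
    using assms(2) unfolding walk_betw_def walk_def by (metis list.collapse)
  show "walk_betw G a (p @ tl q) c"
    using assms p q unfolding walk_betw_def walk_iff_successively
    by (cases "tl q") (auto simp: successively_append_iff)
  show "length (p @ tl q) = length p + length q - 1"
    using q by (cases q) auto
qed

lemma walk_betw_rev: "simple_graph G \<Longrightarrow> walk_betw G a p b \<Longrightarrow> walk_betw G b (rev p) a"
  unfolding walk_betw_def walk_iff_successively
  by (auto simp: hd_rev last_rev simple_graph_adjD(3) elim: successively_mono)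

lemma walk_betw_sublist:
  assumes "walk G xs" "i \<le> j" "j < length xs"
  shows "walk_betw G (xs ! i) (drop i (take (Suc j) xs)) (xs ! j)"
proof -
  have "successively (adj G) (take (Suc j) xs)"
    using assms(1) unfolding walk_iff_successively
    by (metis append_take_drop_id successively_append_iff)
  then have "successively (adj G) (drop i (take (Suc j) xs))"
    by (metis append_take_drop_id successively_append_iff)
  moreover have "set (drop i (take (Suc j) xs)) \<subseteq> verts G"
    using assms(1) set_drop_subset set_take_subset unfolding walk_def by (metis subset_trans)
  ultimately show ?thesis
    using assms by (auto simp: walk_betw_def walk_iff_successively hd_drop_conv_nth last_conv_nth)
qed

lemma dist_le_length: "walk_betw G u xs v \<Longrightarrow> dist G u v \<le> length xs - 1"
  unfolding dist_def walk_betw_def walk_def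
  by (rule Least_le) (metis Suc_pred' length_greater_0_conv)

lemma geodesic_exists:
  assumes "connected_graph G" "u \<in> verts G" "v \<in> verts G"
  shows "\<exists>xs. geodesic G u xs v"
proof -
  obtain xs where xs: "walk_betw G u xs v"
    using assms unfolding connected_graph_def by blast
  then have "length xs = Suc (length xs - 1)"
    by (simp add: walk_betw_def walk_def)
  with xs have "\<exists>k xs. walk_betw G u xs v \<and> length xs = Suc k"
    by blast
  then show ?thesis
    unfolding geodesic_def dist_def by (rule LeastI_ex)
qed

lemma dist_self: "u \<in> verts G \<Longrightarrow> dist G u u = 0"
  using dist_le_length[OF walk_betw_singleton] by fastforce

lemma dist_eq_0_iff:
  assumes "connected_graph G" "u \<in> verts G" "v \<in> verts G"
  shows "dist G u v = 0 \<longleftrightarrow> u = v"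
proof
  assume "dist G u v = 0"
  moreover obtain xs where "geodesic G u xs v"
    using geodesic_exists[OF assms] by blast
  ultimately show "u = v"
    by (auto simp: geodesic_def walk_betw_def length_Suc_conv)
qed (simp add: assms dist_self)

lemma dist_commute:
  assumes "simple_graph G" "connected_graph G" "u \<in> verts G" "v \<in> verts G"
  shows "dist G u v = dist G v u"
proof -
  have "dist G b a \<le> dist G a b" if ab: "a \<in> verts G" "b \<in> verts G" for a b
  proof -
    obtain xs where "geodesic G a xs b"
      using geodesic_exists[OF assms(2) ab] by blast
    then show ?thesis
      using dist_le_length[OF walk_betw_rev[OF assms(1)]] by (fastforce simp: geodesic_def)
  qed
  then show ?thesis
    using assms(3,4) by (simp add: le_antisym)
qed

lemma dist_triangle:
  assumes "connected_graph G" "u \<in> verts G" "v \<in> verts G" "w \<in> verts G"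
  shows "dist G u w \<le> dist G u v + dist G v w"
proof -
  obtain p q where "geodesic G u p v" "geodesic G v q w"
    using geodesic_exists assms by metis
  then show ?thesis
    using dist_le_length[OF walk_betw_append(1)] walk_betw_append(2)
    by (fastforce simp: geodesic_def)
qed

lemma dist_le_1_if_adj: "simple_graph G \<Longrightarrow> adj G u v \<Longrightarrow> dist G u v \<le> 1"
  using dist_le_length[OF walk_betw_edge] by fastforce

lemma dist_le_lazy_walk:
  assumes "simple_graph G" "connected_graph G"
  shows "ys \<noteq> [] \<Longrightarrow> set ys \<subseteq> verts G \<Longrightarrow> successively (\<lambda>a b. a = b \<or> adj G a b) ys \<Longrightarrow>
     dist G (hd ys) (last ys) \<le> length ys - 1"
proof (induction ys)
  case (Cons y ys)
  show ?case
  proof (cases "ys = []")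
    case True
    then show ?thesis
      using Cons.prems dist_self[of y G] by simp
  next
    case False
    have step: "dist G y (hd ys) \<le> 1"
      using Cons.prems False dist_self[of y G] dist_le_1_if_adj[OF assms(1)]
      by (auto simp: successively_Cons)
    have "dist G (hd ys) (last ys) \<le> length ys - 1"
      using Cons False by (simp add: successively_Cons)
    moreover have "dist G y (last ys) \<le> dist G y (hd ys) + dist G (hd ys) (last ys)"
      using Cons.prems(2) False by (intro dist_triangle[OF assms(2)]) auto
    ultimately show ?thesis
      using step False by (cases ys) auto
  qed
qed simp

lemma geodesic_nth_dist:
  assumes "connected_graph G" "geodesic G u xs v"
    and "i \<le> j" "j < length xs"
  shows "dist G (xs ! i) (xs ! j) = j - i"
proof -
  have xs: "walk G xs" "hd xs = u" "last xs = v" "length xs = Suc (dist G u v)"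
    using assms(2) by (auto simp: geodesic_def walk_betw_def)
  have ends: "u = xs ! 0" "v = xs ! (length xs - 1)"
    using xs(1-3) hd_conv_nth[of xs] last_conv_nth[of xs] by (auto simp: walk_def)
  have V: "xs ! k \<in> verts G" if "k < length xs" for k
    using xs(1) that unfolding walk_def by auto
  have sub: "dist G (xs ! k) (xs ! l) \<le> l - k" if "k \<le> l" "l < length xs" for k l
    using dist_le_length[OF walk_betw_sublist[OF xs(1) that]] that by simp
  have "dist G u v \<le> dist G u (xs ! i) + dist G (xs ! i) v"
    unfolding ends using assms(3,4) by (intro dist_triangle[OF assms(1)] V) auto
  moreover have "dist G (xs ! i) v \<le> dist G (xs ! i) (xs ! j) + dist G (xs ! j) v"
    unfolding ends using assms(3,4) by (intro dist_triangle[OF assms(1)] V) auto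
  moreover have "dist G u (xs ! i) \<le> i" "dist G (xs ! j) v \<le> length xs - 1 - j"
    unfolding ends using sub[of 0 i] sub[of j "length xs - 1"] assms(3,4) by auto
  ultimately show ?thesis
    using sub[of i j] assms(3,4) xs(4) by linarith
qed

lemma geodesic_nth_dist_max_min:
  assumes "simple_graph G" "connected_graph G" "geodesic G u xs v"
    and "i < length xs" "j < length xs"
  shows "dist G (xs ! i) (xs ! j) = max i j - min i j"
proof (cases "i \<le> j")
  case True
  then show ?thesis
    using geodesic_nth_dist[OF assms(2,3) True assms(5)] by simp
next
  case False
  have "set xs \<subseteq> verts G"
    using assms(3) by (simp add: geodesic_def walk_betw_def walk_def)
  then have "dist G (xs ! i) (xs ! j) = dist G (xs ! j) (xs ! i)"
    using assms(4,5) by (intro dist_commute[OF assms(1,2)]) auto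
  then show ?thesis
    using geodesic_nth_dist[OF assms(2,3), of j i] False assms(4) by simp
qed

section \<open>General position sets via betweenness\<close>

definition between :: "'a graph \<Rightarrow> 'a \<Rightarrow> 'a \<Rightarrow> 'a \<Rightarrow> bool" where
  "between G x y z \<longleftrightarrow> dist G x z = dist G x y + dist G y z"

lemma geodesic_through_between:
  assumes "connected_graph G" "a \<in> verts G" "b \<in> verts G" "c \<in> verts G"
    and "between G a b c"
  shows "\<exists>xs. geodesic G a xs c \<and> {a, b, c} \<subseteq> set xs"
proof -
  obtain p q where p: "geodesic G a p b" and q: "geodesic G b q c"
    using geodesic_exists assms(1-4) by metis
  then have w: "walk_betw G a (p @ tl q) c" and "length (p @ tl q) = Suc (dist G a c)"
    using walk_betw_append assms(5) by (fastforce simp: geodesic_def between_def)+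
  moreover have "{a, b} \<subseteq> set p"
    using p by (auto simp: geodesic_def walk_betw_def walk_def)
  moreover have "c \<in> set (p @ tl q)"
    using w unfolding walk_betw_def walk_def by (metis last_in_set)
  ultimately show ?thesis
    unfolding geodesic_def by auto
qed

lemma common_geodesic_iff_between:
  assumes "simple_graph G" "connected_graph G"
    and "x \<in> verts G" "y \<in> verts G" "z \<in> verts G" "x \<noteq> y" "y \<noteq> z" "x \<noteq> z"
  shows "(\<exists>u v xs. geodesic G u xs v \<and> {x, y, z} \<subseteq> set xs) \<longleftrightarrow>
    between G x y z \<or> between G y x z \<or> between G x z y"
proof
  assume "\<exists>u v xs. geodesic G u xs v \<and> {x, y, z} \<subseteq> set xs"
  then obtain u v xs p q r where g: "geodesic G u xs v"
    and pqr: "p < length xs" "q < length xs" "r < length xs"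
    and "xs ! p = x" "xs ! q = y" "xs ! r = z"
    by (auto simp: in_set_conv_nth)
  then have "dist G x y = max p q - min p q" "dist G y x = max p q - min p q"
    "dist G x z = max p r - min p r" "dist G z x = max p r - min p r"
    "dist G y z = max q r - min q r" "dist G z y = max q r - min q r"
    using geodesic_nth_dist_max_min[OF assms(1,2) g] by (metis max.commute min.commute)+
  then show "between G x y z \<or> between G y x z \<or> between G x z y"
    unfolding between_def by linarith
next
  assume "between G x y z \<or> between G y x z \<or> between G x z y"
  then show "\<exists>u v xs. geodesic G u xs v \<and> {x, y, z} \<subseteq> set xs"
  proof (elim disjE)
    assume "between G x y z"
    then show ?thesis
      using geodesic_through_between[OF assms(2,3,4,5)] by blast
  next
    assume "between G y x z"
    then show ?thesis
      using geodesic_through_between[OF assms(2,4,3,5)] by blast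
  next
    assume "between G x z y"
    then show ?thesis
      using geodesic_through_between[OF assms(2,3,5,4)] by blast
  qed
qed

lemma gp_set_iff_between:
  assumes "simple_graph G" "connected_graph G"
  shows "gp_set G S \<longleftrightarrow> S \<subseteq> verts G \<and>
    (\<forall>x\<in>S. \<forall>y\<in>S. \<forall>z\<in>S. x \<noteq> y \<and> y \<noteq> z \<and> x \<noteq> z \<longrightarrow> \<not> between G x y z)"
proof (cases "S \<subseteq> verts G")
  case True
  have iff: "(\<exists>u v xs. geodesic G u xs v \<and> {x, y, z} \<subseteq> set xs) \<longleftrightarrow>
      between G x y z \<or> between G y x z \<or> between G x z y"
    if "x \<in> S" "y \<in> S" "z \<in> S" "x \<noteq> y \<and> y \<noteq> z \<and> x \<noteq> z" for x y z
    using that True by (intro common_geodesic_iff_between[OF assms]) auto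
  have "(\<forall>x\<in>S. \<forall>y\<in>S. \<forall>z\<in>S. x \<noteq> y \<and> y \<noteq> z \<and> x \<noteq> z \<longrightarrow>
      \<not> (\<exists>u v xs. geodesic G u xs v \<and> {x, y, z} \<subseteq> set xs)) \<longleftrightarrow>
    (\<forall>x\<in>S. \<forall>y\<in>S. \<forall>z\<in>S. x \<noteq> y \<and> y \<noteq> z \<and> x \<noteq> z \<longrightarrow> \<not> between G x y z)"
    (is "?geo \<longleftrightarrow> ?betw")
  proof
    assume ?geo
    show ?betw
    proof (intro ballI impI)
      fix x y z assume xyz: "x \<in> S" "y \<in> S" "z \<in> S" "x \<noteq> y \<and> y \<noteq> z \<and> x \<noteq> z"
      then have "\<not> (\<exists>u v xs. geodesic G u xs v \<and> {x, y, z} \<subseteq> set xs)"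
        by (rule \<open>?geo\<close>[rule_format])
      then show "\<not> between G x y z"
        unfolding iff[OF xyz] by blast
    qed
  next
    assume ?betw
    show ?geo
    proof (intro ballI impI)
      fix x y z assume xyz: "x \<in> S" "y \<in> S" "z \<in> S" "x \<noteq> y \<and> y \<noteq> z \<and> x \<noteq> z"
      then have "\<not> between G x y z" "\<not> between G y x z" "\<not> between G x z y"
        using \<open>?betw\<close> by auto
      then show "\<not> (\<exists>u v xs. geodesic G u xs v \<and> {x, y, z} \<subseteq> set xs)"
        unfolding iff[OF xyz] by blast
    qed
  qed
  with True show ?thesis
    unfolding gp_set_def by simp
qed (simp add: gp_set_def)

section \<open>Maximum cardinalities of blown-up families\<close>

lemma Max_card_blowup:
  fixes P :: "('a \<times> 'b) set \<Rightarrow> bool" and Q :: "'a set \<Rightarrow> bool"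
  assumes "finite V" "finite I" "Q {}"
    and Q_subset: "\<And>T. Q T \<Longrightarrow> T \<subseteq> V"
    and P_subset: "\<And>S. P S \<Longrightarrow> S \<subseteq> V \<times> I"
    and project: "\<And>S. P S \<Longrightarrow> Q (fst ` S)"
    and blowup: "\<And>T. Q T \<Longrightarrow> P (T \<times> I)"
  shows "Max {card S | S. P S} = card I * Max {card T | T. Q T}"
proof -
  let ?M = "Max {card T | T. Q T}"
  have "{card T | T. Q T} \<subseteq> card ` Pow V" "{card S | S. P S} \<subseteq> card ` Pow (V \<times> I)"
    using Q_subset P_subset by blast+
  then have fin: "finite {card T | T. Q T}" "finite {card S | S. P S}"
    using assms(1,2) by (simp_all add: finite_subset)
  obtain T where T: "Q T" "card T = ?M"
    using Max_in[OF fin(1)] assms(3) by fastforce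
  show ?thesis
  proof (rule Max_eqI[OF fin(2)])
    fix c assume "c \<in> {card S | S. P S}"
    then obtain S where S: "P S" "c = card S" by blast
    have "S \<subseteq> fst ` S \<times> I"
      using P_subset[OF S(1)] by force
    moreover have "finite (fst ` S)"
      using Q_subset[OF project[OF S(1)]] assms(1) by (rule finite_subset)
    ultimately have "card S \<le> card (fst ` S) * card I"
      using assms(2) card_mono card_cartesian_product by (metis finite_SigmaI)
    also have "\<dots> \<le> ?M * card I"
      using fin(1) project[OF S(1)] by (intro mult_right_mono Max_ge) auto
    finally show "c \<le> card I * ?M"
      using S(2) by (simp add: mult.commute)
  next
    show "card I * ?M \<in> {card S | S. P S}"
      using blowup[OF T(1)] card_cartesian_product[of T I] T(2) by (force simp: mult.commute)
  qed
qed

section \<open>Distances in the strong product with a complete graph\<close>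

lemma verts_strong_product_complete:
  "verts (strong_product G (complete_graph n)) = verts G \<times> {0..<n}"
  by (simp add: strong_product_def verts_def complete_graph_def)

lemma adj_strong_product_complete:
  "adj (strong_product G (complete_graph n)) (x, i) (y, j) \<longleftrightarrow>
    x \<in> verts G \<and> y \<in> verts G \<and> i < n \<and> j < n \<and> (x, i) \<noteq> (y, j) \<and> (x = y \<or> adj G x y)"
  by (auto simp: strong_product_def verts_def complete_graph_def adj_def)

lemma simple_graph_strong_product_complete:
  "simple_graph G \<Longrightarrow> simple_graph (strong_product G (complete_graph n))"
  unfolding simple_graph_def
  by (auto simp: strong_product_def verts_def complete_graph_def adj_def sym_def irrefl_def)

lemma walk_betw_strong_product_complete_lift:
  assumes "simple_graph G" "walk_betw G x xs y" "x \<noteq> y" "i < n" "j < n"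
  shows "walk_betw (strong_product G (complete_graph n))
    (x, i) ((x, i) # map (\<lambda>g. (g, j)) (tl xs)) (y, j)"
proof -
  obtain ys where xs: "xs = x # ys" "ys \<noteq> []"
    using assms(2,3) unfolding walk_betw_def walk_def by (metis last_ConsL list.collapse)
  have ys: "successively (adj G) ys" "adj G x (hd ys)" "set xs \<subseteq> verts G" "last ys = y"
    using assms(2) xs by (auto simp: walk_betw_def walk_iff_successively successively_Cons)
  have "successively (adj (strong_product G (complete_graph n))) (map (\<lambda>g. (g, j)) ys)"
    unfolding successively_map using ys(1)
    by (rule successively_mono)
      (use assms(1,5) in \<open>auto simp: adj_strong_product_complete simple_graph_adjD\<close>)
  with ys xs assms(1,4,5) show ?thesis
    by (auto simp: walk_betw_def walk_iff_successively successively_Cons hd_map last_map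
        adj_strong_product_complete simple_graph_adjD verts_strong_product_complete)
qed

lemma connected_graph_strong_product_complete:
  assumes "simple_graph G" "connected_graph G" "n \<ge> 1"
  shows "connected_graph (strong_product G (complete_graph n))"
  unfolding connected_graph_def
proof (intro conjI ballI)
  show "verts (strong_product G (complete_graph n)) \<noteq> {}"
    using assms(2,3) by (auto simp: connected_graph_def verts_strong_product_complete)
next
  fix p q
  assume "p \<in> verts (strong_product G (complete_graph n))"
    and "q \<in> verts (strong_product G (complete_graph n))"
  then obtain x i y j
    where pq: "p = (x, i)" "q = (y, j)" "x \<in> verts G" "y \<in> verts G" "i < n" "j < n"
    by (auto simp: verts_strong_product_complete)
  show "\<exists>xs. walk_betw (strong_product G (complete_graph n)) p xs q"
  proof (cases "x = y")
    case True
    show ?thesis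
    proof (cases "i = j")
      case True
      then show ?thesis
        using pq \<open>x = y\<close> walk_betw_singleton[of p "strong_product G (complete_graph n)"]
        by (auto simp: verts_strong_product_complete)
    next
      case False
      then have "adj (strong_product G (complete_graph n)) p q"
        using pq \<open>x = y\<close> by (simp add: adj_strong_product_complete)
      then show ?thesis
        using walk_betw_edge[OF simple_graph_strong_product_complete[OF assms(1)]] by blast
    qed
  next
    case False
    obtain xs where "walk_betw G x xs y"
      using assms(2) pq unfolding connected_graph_def by blast
    then show ?thesis
      using walk_betw_strong_product_complete_lift[OF assms(1) _ False pq(5,6)] pq by blast
  qed
qed

lemma dist_fst_le_dist_strong_product_complete:
  assumes "simple_graph G" "connected_graph G"
    and "a \<in> verts (strong_product G (complete_graph n))"
    and "b \<in> verts (strong_product G (complete_graph n))"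
  shows "dist G (fst a) (fst b) \<le> dist (strong_product G (complete_graph n)) a b"
proof -
  have "connected_graph (strong_product G (complete_graph n))"
    using assms
    by (intro connected_graph_strong_product_complete) (auto simp: verts_strong_product_complete)
  then obtain zs where zs: "geodesic (strong_product G (complete_graph n)) a zs b"
    using geodesic_exists assms(3,4) by metis
  have "successively (\<lambda>a b. a = b \<or> adj G a b) (map fst zs)"
    unfolding successively_map using zs
    by (auto simp: geodesic_def walk_betw_def walk_iff_successively adj_strong_product_complete
        elim!: successively_mono)
  then have "dist G (hd (map fst zs)) (last (map fst zs)) \<le> length (map fst zs) - 1"
    using zs by (intro dist_le_lazy_walk[OF assms(1,2)])
      (auto simp: geodesic_def walk_betw_def walk_def verts_strong_product_complete)
  then show ?thesis
    using zs by (auto simp: geodesic_def walk_betw_def walk_def hd_map last_map)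
qed

lemma dist_strong_product_complete:
  assumes "simple_graph G" "connected_graph G"
    and "x \<in> verts G" "y \<in> verts G" "i < n" "j < n"
  shows "dist (strong_product G (complete_graph n)) (x, i) (y, j) =
    (if x = y then if i = j then 0 else 1 else dist G x y)"
proof -
  let ?P = "strong_product G (complete_graph n)"
  have P: "simple_graph ?P" "connected_graph ?P"
    using assms
    by (simp_all add: simple_graph_strong_product_complete connected_graph_strong_product_complete)
  have V: "(x, i) \<in> verts ?P" "(y, j) \<in> verts ?P"
    using assms(3-6) by (simp_all add: verts_strong_product_complete)
  consider "x = y" "i = j" | "x = y" "i \<noteq> j" | "x \<noteq> y"
    by blast
  then show ?thesis
  proof cases
    case 1
    then show ?thesis
      using V dist_self by simp
  next
    case 2
    then have "adj ?P (x, i) (y, j)"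
      using assms(3-6) by (simp add: adj_strong_product_complete)
    then have "dist ?P (x, i) (y, j) \<le> 1"
      by (rule dist_le_1_if_adj[OF P(1)])
    moreover have "dist ?P (x, i) (y, j) \<noteq> 0"
      using dist_eq_0_iff[OF P(2) V] 2 by simp
    ultimately show ?thesis
      using 2 by simp
  next
    case 3
    obtain xs where "geodesic G x xs y"
      using geodesic_exists[OF assms(2-4)] by blast
    then have "dist ?P (x, i) (y, j) \<le> dist G x y"
      using dist_le_length[OF walk_betw_strong_product_complete_lift[OF assms(1) _ 3 assms(5,6)]]
      by (fastforce simp: geodesic_def walk_betw_def walk_def)
    moreover have "dist G x y \<le> dist ?P (x, i) (y, j)"
      using dist_fst_le_dist_strong_product_complete[OF assms(1,2) V] by simp
    ultimately show ?thesis
      using 3 by simp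
  qed
qed

lemma between_strong_product_complete_iff:
  assumes "simple_graph G" "connected_graph G"
    and "x \<in> verts G" "y \<in> verts G" "z \<in> verts G" "i < n" "j < n" "k < n"
    and "(x, i) \<noteq> (y, j)" "(y, j) \<noteq> (z, k)" "(x, i) \<noteq> (z, k)"
  shows "between (strong_product G (complete_graph n)) (x, i) (y, j) (z, k) \<longleftrightarrow>
    x \<noteq> y \<and> y \<noteq> z \<and> x \<noteq> z \<and> between G x y z"
proof -
  have "dist G a b \<noteq> 0" if "a \<in> {x, y, z}" "b \<in> {x, y, z}" "a \<noteq> b" for a b
    using that assms(3-5) dist_eq_0_iff[OF assms(2)] by blast
  moreover have "dist G y x = dist G x y"
    using dist_commute[OF assms(1,2,4,3)] .
  ultimately show ?thesis
    using assms(9-11)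
    unfolding between_def dist_strong_product_complete[OF assms(1,2,3,4,6,7)]
      dist_strong_product_complete[OF assms(1,2,4,5,7,8)]
      dist_strong_product_complete[OF assms(1,2,3,5,6,8)]
    by (auto; presburger) \<comment> \<open>the case x = z \<noteq> y leaves the parity contradiction 1 = 2 d(x, y)\<close>
qed

section \<open>General position number\<close>

lemma gp_set_strong_product_complete_fst_image:
  assumes "simple_graph G" "connected_graph G" "n \<ge> 1"
    and "gp_set (strong_product G (complete_graph n)) S"
  shows "gp_set G (fst ` S)"
proof -
  let ?P = "strong_product G (complete_graph n)"
  have P: "simple_graph ?P" "connected_graph ?P"
    using assms(1-3)
    by (simp_all add: simple_graph_strong_product_complete connected_graph_strong_product_complete)
  have S: "S \<subseteq> verts G \<times> {0..<n}"
    using assms(4) by (simp add: gp_set_def verts_strong_product_complete)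
  show ?thesis
    unfolding gp_set_iff_between[OF assms(1,2)]
  proof (intro conjI ballI impI notI)
    show "fst ` S \<subseteq> verts G"
      using S by auto
  next
    fix x y z
    assume "x \<in> fst ` S" "y \<in> fst ` S" "z \<in> fst ` S"
      and xyz: "x \<noteq> y \<and> y \<noteq> z \<and> x \<noteq> z" and "between G x y z"
    then obtain i j k where ijk: "(x, i) \<in> S" "(y, j) \<in> S" "(z, k) \<in> S"
      by force
    with S xyz \<open>between G x y z\<close> have "between ?P (x, i) (y, j) (z, k)"
      by (subst between_strong_product_complete_iff[OF assms(1,2)]) auto
    with assms(4) ijk xyz show False
      unfolding gp_set_iff_between[OF P] by blast
  qed
qed

lemma gp_set_strong_product_complete_Times:
  assumes "simple_graph G" "connected_graph G" "n \<ge> 1" "gp_set G T"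
  shows "gp_set (strong_product G (complete_graph n)) (T \<times> {0..<n})"
proof -
  let ?P = "strong_product G (complete_graph n)"
  have P: "simple_graph ?P" "connected_graph ?P"
    using assms(1-3)
    by (simp_all add: simple_graph_strong_product_complete connected_graph_strong_product_complete)
  have T: "T \<subseteq> verts G"
    using assms(4) by (simp add: gp_set_def)
  show ?thesis
    unfolding gp_set_iff_between[OF P]
  proof (intro conjI ballI impI notI)
    show "T \<times> {0..<n} \<subseteq> verts ?P"
      using T by (auto simp: verts_strong_product_complete)
  next
    fix a b c
    assume "a \<in> T \<times> {0..<n}" "b \<in> T \<times> {0..<n}" "c \<in> T \<times> {0..<n}"
    then obtain x i y j z k where xyz: "a = (x, i)" "b = (y, j)" "c = (z, k)"
      "x \<in> T" "y \<in> T" "z \<in> T" "i < n" "j < n" "k < n"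
      by auto
    assume "a \<noteq> b \<and> b \<noteq> c \<and> a \<noteq> c" and "between ?P a b c"
    moreover have "x \<in> verts G" "y \<in> verts G" "z \<in> verts G"
      using T xyz(4-6) by auto
    ultimately have "x \<noteq> y \<and> y \<noteq> z \<and> x \<noteq> z \<and> between G x y z"
      using between_strong_product_complete_iff[OF assms(1,2) _ _ _ xyz(7-9)] xyz(1-3) by auto
    with assms(4) xyz(4-6) show False
      unfolding gp_set_iff_between[OF assms(1,2)] by blast
  qed
qed

theorem gp_strong_product_complete:
  assumes "simple_graph G" "connected_graph G" "n \<ge> 1"
  shows "gp (strong_product G (complete_graph n)) = n * gp G"
proof -
  have "finite (verts G)"
    using assms(1) by (simp add: simple_graph_def)
  then show ?thesis
    unfolding gp_def
    using Max_card_blowup[of "verts G" "{0..<n}" "gp_set G"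
        "gp_set (strong_product G (complete_graph n))"]
      gp_set_strong_product_complete_fst_image[OF assms]
      gp_set_strong_product_complete_Times[OF assms]
    by (auto simp: gp_set_def verts_strong_product_complete)
qed

section \<open>Strong resolving graph\<close>

lemma maximally_distant_strong_product_complete_iff:
  assumes "simple_graph G" "connected_graph G"
    and "x \<in> verts G" "y \<in> verts G" "i < n" "j < n" "x \<noteq> y"
  shows "maximally_distant (strong_product G (complete_graph n)) (x, i) (y, j) \<longleftrightarrow>
    maximally_distant G x y"
proof -
  let ?P = "strong_product G (complete_graph n)"
  have d: "dist ?P (y, j) (w, k) = (if y = w then if j = k then 0 else 1 else dist G y w)"
    if "w \<in> verts G" "k < n" for w k
    using dist_strong_product_complete[OF assms(1,2,4) that(1) assms(6) that(2)] .
  have dxy: "dist ?P (x, i) (y, j) = dist G x y" "dist G y x = dist G x y" "dist G x y \<noteq> 0"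
    using dist_strong_product_complete[OF assms(1-6)] dist_commute[OF assms(1,2,4,3)]
      dist_eq_0_iff[OF assms(2-4)] assms(7) by auto
  show ?thesis
  proof
    assume md: "maximally_distant ?P (x, i) (y, j)"
    show "maximally_distant G x y"
      unfolding maximally_distant_def
    proof (intro allI impI)
      fix w assume "adj G x w"
      then have "adj ?P (x, i) (w, i)" "w \<in> verts G"
        using simple_graph_adjD[OF assms(1)] assms(3,5)
        by (auto simp: adj_strong_product_complete)
      then have "dist ?P (y, j) (w, i) \<le> dist G x y"
        using md dxy(1) unfolding maximally_distant_def by auto
      then show "dist G y w \<le> dist G x y"
        using d[OF \<open>w \<in> verts G\<close> assms(5)] dist_self[OF assms(4)]
        by (cases "w = y") auto
    qed
  next
    assume md: "maximally_distant G x y"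
    show "maximally_distant ?P (x, i) (y, j)"
      unfolding maximally_distant_def
    proof (intro allI impI)
      fix w assume "adj ?P (x, i) w"
      then obtain w1 w2 where w: "w = (w1, w2)" "w1 \<in> verts G" "w2 < n" "w1 = x \<or> adj G x w1"
        by (cases w) (auto simp: adj_strong_product_complete)
      then show "dist ?P (y, j) w \<le> dist ?P (x, i) (y, j)"
        using md d[of w1 w2] dxy unfolding maximally_distant_def by auto
    qed
  qed
qed

lemma maximally_distant_strong_product_complete_same_fst:
  assumes "simple_graph G" "connected_graph G" "x \<in> verts G" "i < n" "j < n" "i \<noteq> j"
  shows "maximally_distant (strong_product G (complete_graph n)) (x, i) (x, j)"
  unfolding maximally_distant_def
proof (intro allI impI)
  fix w assume "adj (strong_product G (complete_graph n)) (x, i) w"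
  then obtain w1 w2 where w: "w = (w1, w2)" "w1 \<in> verts G" "w2 < n" "w1 = x \<or> adj G x w1"
    by (cases w) (auto simp: adj_strong_product_complete)
  then show "dist (strong_product G (complete_graph n)) (x, j) w \<le>
      dist (strong_product G (complete_graph n)) (x, i) (x, j)"
    using assms dist_le_1_if_adj[OF assms(1), of x w1]
    by (auto simp: dist_strong_product_complete)
qed

lemma MMD_strong_product_complete_iff:
  assumes "simple_graph G" "connected_graph G"
    and "x \<in> verts G" "y \<in> verts G" "i < n" "j < n" "(x, i) \<noteq> (y, j)"
  shows "MMD (strong_product G (complete_graph n)) (x, i) (y, j) \<longleftrightarrow> x = y \<or> MMD G x y"
proof (cases "x = y")
  case True
  then show ?thesis
    using assms maximally_distant_strong_product_complete_same_fst[OF assms(1,2)]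
    by (simp add: MMD_def)
next
  case False
  then show ?thesis
    using maximally_distant_strong_product_complete_iff[OF assms(1-6) False]
      maximally_distant_strong_product_complete_iff[OF assms(1,2,4,3,6,5)]
    by (simp add: MMD_def)
qed

lemma verts_strong_resolving_graph: "verts (strong_resolving_graph G) = verts G"
  by (simp add: strong_resolving_graph_def verts_def)

lemma adj_strong_resolving_graph:
  "adj (strong_resolving_graph G) u v \<longleftrightarrow> u \<in> verts G \<and> v \<in> verts G \<and> u \<noteq> v \<and> MMD G u v"
  by (simp add: strong_resolving_graph_def verts_def adj_def)

lemma clique_strong_resolving_strong_product_complete_fst_image:
  assumes "simple_graph G" "connected_graph G"
    and "clique (strong_resolving_graph (strong_product G (complete_graph n))) K"
  shows "clique (strong_resolving_graph G) (fst ` K)"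
proof -
  have K: "K \<subseteq> verts G \<times> {0..<n}"
    using assms(3)
    by (simp add: clique_def verts_strong_resolving_graph verts_strong_product_complete)
  show ?thesis
    unfolding clique_def verts_strong_resolving_graph
  proof (intro conjI ballI impI)
    show "fst ` K \<subseteq> verts G"
      using K by auto
    fix x y assume "x \<in> fst ` K" "y \<in> fst ` K" "x \<noteq> y"
    then obtain i j where ij: "(x, i) \<in> K" "(y, j) \<in> K"
      by force
    with assms(3) \<open>x \<noteq> y\<close> have "MMD (strong_product G (complete_graph n)) (x, i) (y, j)"
      by (auto simp: clique_def adj_strong_resolving_graph)
    moreover have "x \<in> verts G" "y \<in> verts G" "i < n" "j < n"
      using ij K by auto
    ultimately show "adj (strong_resolving_graph G) x y"
      using MMD_strong_product_complete_iff[OF assms(1,2)] \<open>x \<noteq> y\<close>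
      by (auto simp: adj_strong_resolving_graph)
  qed
qed

lemma clique_strong_resolving_strong_product_complete_Times:
  assumes "simple_graph G" "connected_graph G" "clique (strong_resolving_graph G) K"
  shows "clique (strong_resolving_graph (strong_product G (complete_graph n))) (K \<times> {0..<n})"
proof -
  have K: "K \<subseteq> verts G"
    using assms(3) by (simp add: clique_def verts_strong_resolving_graph)
  show ?thesis
    unfolding clique_def verts_strong_resolving_graph
  proof (intro conjI ballI impI)
    show "K \<times> {0..<n} \<subseteq> verts (strong_product G (complete_graph n))"
      using K by (auto simp: verts_strong_product_complete)
    fix a b assume "a \<in> K \<times> {0..<n}" "b \<in> K \<times> {0..<n}"
    then obtain x i y j where xy: "a = (x, i)" "b = (y, j)" "x \<in> K" "y \<in> K" "i < n" "j < n"
      by auto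
    assume "a \<noteq> b"
    have V: "x \<in> verts G" "y \<in> verts G"
      using K xy(3,4) by auto
    have "x = y \<or> MMD G x y"
      using assms(3) xy(3,4) by (auto simp: clique_def adj_strong_resolving_graph)
    then have "MMD (strong_product G (complete_graph n)) (x, i) (y, j)"
      using MMD_strong_product_complete_iff[OF assms(1,2) V xy(5,6)] xy \<open>a \<noteq> b\<close> by simp
    then show "adj (strong_resolving_graph (strong_product G (complete_graph n))) a b"
      using V xy \<open>a \<noteq> b\<close>
      by (simp add: adj_strong_resolving_graph verts_strong_product_complete)
  qed
qed

theorem clique_number_strong_resolving_strong_product_complete:
  assumes "simple_graph G" "connected_graph G"
  shows "clique_number (strong_resolving_graph (strong_product G (complete_graph n))) =
    n * clique_number (strong_resolving_graph G)"
proof -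
  have "finite (verts G)"
    using assms(1) by (simp add: simple_graph_def)
  then show ?thesis
    unfolding clique_number_def
    using Max_card_blowup[of "verts G" "{0..<n}" "clique (strong_resolving_graph G)"
        "clique (strong_resolving_graph (strong_product G (complete_graph n)))"]
      clique_strong_resolving_strong_product_complete_fst_image[OF assms]
      clique_strong_resolving_strong_product_complete_Times[OF assms]
    by (auto simp: clique_def verts_strong_resolving_graph verts_strong_product_complete)
qed

theorem proposition4p3:
  fixes G :: "'a graph" and n :: nat
  assumes "simple_graph G" and "connected_graph G" and "n \<ge> 1"
  shows "gp (strong_product G (complete_graph n)) = n * gp G
    \<and> (gp G = clique_number (strong_resolving_graph G) \<longrightarrow>
         gp (strong_product G (complete_graph n)) =
           clique_number (strong_resolving_graph (strong_product G (complete_graph n))))"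
  using gp_strong_product_complete[OF assms]
    clique_number_strong_resolving_strong_product_complete[OF assms(1,2)]
  by simp

end
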